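(* Let $G$ be a Ricci-flat graph with maximum degree at most $4$ that contains an edge $(x,y)$ with $d(x)=3$ and $d(y)=4$. Then $(x,y)$ is not contained in any cycle of length $3$.
   Context: All graphs are simple (no loops or multiple edges), undirected, connected and locally finite; $d(x)$ is the degree of $x$ and $d(x,y)$ the graph distance. For a vertex $x$ and $\alpha\in[0,1]$ let $\mu_x^\alpha$ be the probability measure with $\mu_x^\alpha(x)=\alpha$, $\mu_x^\alpha(z)=\frac{1-\alpha}{d(x)}$ for $z\sim x$, and $0$ otherwise. The transportation distance is $W(\mu_1,\mu_2)=\inf_A\sum_{u,v}A(u,v)d(u,v)$ over all couplings $A$ of $\mu_1,\mu_2$. Set $k_\alpha(x,y)=1-W(\mu_x^\alpha,\mu_y^\alpha)/d(x,y)$ and $k(x,y)=\lim_{\alpha\to1}k_\alpha(x,y)/(1-\alpha)$ (Lin–Lu–Yau Ricci curvature). A graph is Ricci-flat if $k(x,y)=0$ for every edge $(x,y)$. An edge is contained in a cycle of length $\ell$ if some cycle subgraph of $G$ with $\ell$ vertices uses that edge. *)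

theory Defs
  imports "HOL-Analysis.Analysis"
begin

definition edge_rel :: "('a \<Rightarrow> 'a \<Rightarrow> bool) \<Rightarrow> ('a \<times> 'a) set" where
  "edge_rel E = {(u, v). E u v}"

definition graph :: "('a \<Rightarrow> 'a \<Rightarrow> bool) \<Rightarrow> bool" where
  "graph E \<longleftrightarrow>
     (\<forall>u v. E u v \<longrightarrow> E v u) \<and>
     (\<forall>u. \<not> E u u) \<and>
     (\<forall>u. finite {v. E u v}) \<and>
     (\<forall>u v. (u, v) \<in> (edge_rel E)\<^sup>*)"

definition deg :: "('a \<Rightarrow> 'a \<Rightarrow> bool) \<Rightarrow> 'a \<Rightarrow> nat" where
  "deg E x = card {z. E x z}"

definition gdist :: "('a \<Rightarrow> 'a \<Rightarrow> bool) \<Rightarrow> 'a \<Rightarrow> 'a \<Rightarrow> nat" where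
  "gdist E u v = (LEAST n. (u, v) \<in> (edge_rel E) ^^ n)"

definition mu :: "('a \<Rightarrow> 'a \<Rightarrow> bool) \<Rightarrow> real \<Rightarrow> 'a \<Rightarrow> 'a \<Rightarrow> real" where
  "mu E \<alpha> x z = (if z = x then \<alpha> else if E x z then (1 - \<alpha>) / real (deg E x) else 0)"

definition supp :: "('a \<Rightarrow> real) \<Rightarrow> 'a set" where
  "supp m = {u. m u \<noteq> 0}"

text \<open>Couplings of two finitely supported measures (any coupling is supported on
  the product of the supports, since it is nonnegative).\<close>
definition coupling :: "('a \<Rightarrow> real) \<Rightarrow> ('a \<Rightarrow> real) \<Rightarrow> ('a \<Rightarrow> 'a \<Rightarrow> real) \<Rightarrow> bool" where
  "coupling m1 m2 A \<longleftrightarrow>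
     (\<forall>u v. A u v \<ge> 0) \<and>
     (\<forall>u v. A u v \<noteq> 0 \<longrightarrow> u \<in> supp m1 \<and> v \<in> supp m2) \<and>
     (\<forall>u \<in> supp m1. (\<Sum>v\<in>supp m2. A u v) = m1 u) \<and>
     (\<forall>v \<in> supp m2. (\<Sum>u\<in>supp m1. A u v) = m2 v)"

definition transport :: "('a \<Rightarrow> 'a \<Rightarrow> bool) \<Rightarrow> ('a \<Rightarrow> real) \<Rightarrow> ('a \<Rightarrow> real) \<Rightarrow> real" where
  "transport E m1 m2 =
     Inf {(\<Sum>(u, v)\<in>supp m1 \<times> supp m2. A u v * real (gdist E u v)) | A. coupling m1 m2 A}"

definition kappa :: "('a \<Rightarrow> 'a \<Rightarrow> bool) \<Rightarrow> real \<Rightarrow> 'a \<Rightarrow> 'a \<Rightarrow> real" where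
  "kappa E \<alpha> x y = 1 - transport E (mu E \<alpha> x) (mu E \<alpha> y) / real (gdist E x y)"

text \<open>Lin--Lu--Yau curvature limit k(x,y) exists and equals 0 on every edge.\<close>
definition ricci_flat :: "('a \<Rightarrow> 'a \<Rightarrow> bool) \<Rightarrow> bool" where
  "ricci_flat E \<longleftrightarrow>
     (\<forall>x y. E x y \<longrightarrow> ((\<lambda>\<alpha>. kappa E \<alpha> x y / (1 - \<alpha>)) \<longlongrightarrow> 0) (at_left 1))"

definition edge_in_cycle :: "('a \<Rightarrow> 'a \<Rightarrow> bool) \<Rightarrow> 'a \<Rightarrow> 'a \<Rightarrow> nat \<Rightarrow> bool" where
  "edge_in_cycle E x y l \<longleftrightarrow>
     (\<exists>vs. length vs = l \<and> l \<ge> 3 \<and> distinct vs \<and>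
        (\<forall>i<l. E (vs ! i) (vs ! ((i + 1) mod l))) \<and>
        (\<exists>i<l. {vs ! i, vs ! ((i + 1) mod l)} = {x, y}))"

end

(* Let z be a common neighbour of x and y and w the third neighbour of x.  Curvature is read
   off from W(mu_x, mu_y) = 1 - k(x,y) (1 - alpha) + o(1 - alpha): an explicit transport plan of
   cost at most 1 - c (1 - alpha) shows k > 0, and a 1-Lipschitz test function whose mean
   difference is at least 1 + c (1 - alpha) shows k < 0.  The edge xy (resp. xz) has positive
   curvature as soon as w is within distance 2 of a neighbour of y (resp. z) outside the
   triangle; xz has positive curvature if deg z <= 3, and xw if w is a leaf.  In the remaining
   case every other neighbour of w is at distance at least 3 from y and z, and the test function
   taking the values 1, 2, 2, 0 at x, y, z, w and -1 elsewhere shows that xw has negative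
   curvature. *)

theory Submission
  imports Defs
begin

lemma graph_sym: "graph E \<Longrightarrow> E u v \<Longrightarrow> E v u"
  by (simp add: graph_def)

lemma graph_irrefl: "graph E \<Longrightarrow> \<not> E u u"
  by (simp add: graph_def)

lemma neighbours_eq_insert:
  assumes g: "graph E" and B: "B \<subseteq> {v. E x v}" and d: "deg E x = Suc (card B)"
  obtains a where "a \<notin> B" "a \<noteq> x" "{v. E x v} = insert a B"
proof -
  have fin: "finite {v. E x v}"
    using g by (simp add: graph_def)
  then have "card ({v. E x v} - B) = 1"
    using B d by (simp add: deg_def card_Diff_subset finite_subset)
  then obtain a where a: "{v. E x v} - B = {a}"
    by (auto simp: card_1_singleton_iff)
  then have "E x a"
    by auto
  then show thesis
    using that a B graph_irrefl[OF g, of x] by blast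
qed

lemma degree_3_neighbours:
  assumes g: "graph E" and "deg E x = 3" "E x y" "E x z" "y \<noteq> z"
  obtains w where "{v. E x v} = {y, z, w}" "distinct [x, y, z, w]"
proof -
  have "{y, z} \<subseteq> {v. E x v}" "deg E x = Suc (card {y, z})"
    using assms(2-5) by auto
  then obtain w where "w \<notin> {y, z}" "w \<noteq> x" "{v. E x v} = insert w {y, z}"
    by (rule neighbours_eq_insert[OF g])
  moreover have "x \<noteq> y" "x \<noteq> z"
    using assms(3,4) graph_irrefl[OF g] by auto
  ultimately show thesis
    using that[of w] assms(5) by auto
qed

lemma triangle_common_neighbour:
  assumes g: "graph E" and "edge_in_cycle E x y 3"
  obtains z where "E x z" "E y z"
proof -
  obtain vs i where cyc: "\<forall>j<3. E (vs ! j) (vs ! ((j + 1) mod 3))"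
    and "i < 3" and xy: "{vs ! i, vs ! ((i + 1) mod 3)} = {x, y}"
    using assms(2) unfolding edge_in_cycle_def by blast
  have "i = 0 \<or> i = 1 \<or> i = 2"
    using \<open>i < 3\<close> by auto
  then have "E (vs ! ((i + 1) mod 3)) (vs ! ((i + 2) mod 3)) \<and> E (vs ! ((i + 2) mod 3)) (vs ! i)"
    using cyc[rule_format, of 0] cyc[rule_format, of 1] cyc[rule_format, of 2] by (auto simp: numeral_2_eq_2)
  then show thesis
    using that xy graph_sym[OF g] by (auto simp: doubleton_eq_iff)
qed

lemma gdist_le_relpow: "(u, v) \<in> edge_rel E ^^ n \<Longrightarrow> gdist E u v \<le> n"
  unfolding gdist_def by (rule Least_le)

lemma relpow_gdist:
  assumes "graph E"
  shows "(u, v) \<in> edge_rel E ^^ gdist E u v"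
proof -
  obtain n where "(u, v) \<in> edge_rel E ^^ n"
    using assms rtrancl_power unfolding graph_def by blast
  then show ?thesis
    unfolding gdist_def by (rule LeastI)
qed

lemma gdist_le_iff:
  "graph E \<Longrightarrow> gdist E u v \<le> n \<longleftrightarrow> (\<exists>k\<le>n. (u, v) \<in> edge_rel E ^^ k)"
  by (meson gdist_le_relpow le_trans relpow_gdist)

lemma gdist_le_1_iff:
  assumes "graph E"
  shows "gdist E u v \<le> 1 \<longleftrightarrow> u = v \<or> E u v"
  unfolding gdist_le_iff[OF assms]
  by (simp add: le_Suc_eq conj_disj_distribR ex_disj_distrib edge_rel_def)

lemma gdist_le_2_iff:
  assumes "graph E"
  shows "gdist E u v \<le> 2 \<longleftrightarrow> u = v \<or> E u v \<or> (\<exists>s. E u s \<and> E s v)"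
  unfolding gdist_le_iff[OF assms]
  by (simp add: le_Suc_eq numeral_2_eq_2 conj_disj_distribR ex_disj_distrib edge_rel_def relcomp_unfold)

lemma gdist_self [simp]: "gdist E u u = 0"
  using gdist_le_relpow[of u u 0 E] by simp

lemma gdist_edge:
  assumes "graph E" "E u v"
  shows "gdist E u v = 1"
proof -
  have "u \<noteq> v"
    using assms by (auto simp: graph_def)
  then have "gdist E u v \<noteq> 0"
    using relpow_gdist[OF assms(1), of u v] by (cases "gdist E u v") auto
  with assms show ?thesis
    using gdist_le_1_iff[OF assms(1), of u v] by linarith
qed

lemma gdist_triangle:
  assumes "graph E"
  shows "gdist E u w \<le> gdist E u v + gdist E v w"
  using relpow_gdist[OF assms, of u v] relpow_gdist[OF assms, of v w]
  by (intro gdist_le_relpow) (auto simp: relpow_add)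

lemma mu_nonneg: "0 \<le> \<alpha> \<Longrightarrow> \<alpha> \<le> 1 \<Longrightarrow> 0 \<le> mu E \<alpha> x v"
  by (simp add: mu_def)

lemma mu_neighbours:
  "{v. E x v} = N \<Longrightarrow> mu E \<alpha> x v = (if v = x then \<alpha> else if v \<in> N then (1 - \<alpha>) / card N else 0)"
  by (auto simp: mu_def deg_def)

lemma supp_mu:
  assumes "graph E" "0 < \<alpha>" "\<alpha> < 1" "E x y"
  shows "supp (mu E \<alpha> x) = insert x {v. E x v}"
proof -
  have "finite {v. E x v}" "y \<in> {v. E x v}"
    using assms by (auto simp: graph_def)
  then have "0 < deg E x"
    unfolding deg_def by (auto simp: card_gt_0_iff)
  then show ?thesis
    using assms(2,3) by (auto simp: supp_def mu_def)
qed

lemma sum_mu_weighted: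
  assumes "graph E"
  shows "(\<Sum>v\<in>insert x {v. E x v}. f v * mu E \<alpha> x v) = \<alpha> * f x + (1 - \<alpha>) / deg E x * (\<Sum>v\<in>{v. E x v}. f v)"
proof -
  have "finite {v. E x v}" "x \<notin> {v. E x v}"
    using assms by (auto simp: graph_def)
  then have "(\<Sum>v\<in>insert x {v. E x v}. f v * mu E \<alpha> x v) = \<alpha> * f x + (\<Sum>v\<in>{v. E x v}. f v * mu E \<alpha> x v)"
    by (simp add: mu_def)
  also have "(\<Sum>v\<in>{v. E x v}. f v * mu E \<alpha> x v) = (1 - \<alpha>) / deg E x * (\<Sum>v\<in>{v. E x v}. f v)"
    unfolding sum_distrib_left using \<open>x \<notin> {v. E x v}\<close> by (intro sum.cong) (auto simp: mu_def)
  finally show ?thesis .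
qed

lemma sum_mu:
  assumes g: "graph E" and "0 < \<alpha>" "\<alpha> < 1" and xy: "E x y"
  shows "sum (mu E \<alpha> x) (supp (mu E \<alpha> x)) = 1"
proof -
  have "finite {v. E x v}" "y \<in> {v. E x v}"
    using g xy by (auto simp: graph_def)
  then have "deg E x \<noteq> 0"
    by (auto simp: deg_def)
  then show ?thesis
    using sum_mu_weighted[OF g, where f = "\<lambda>_. 1" and x = x and \<alpha> = \<alpha>] by (simp add: supp_mu[OF assms] deg_def)
qed

(* A move (p, q, c, d) carries mass c from p to q, and d is an upper bound for gdist E p q. *)
type_synonym 'a plan = "('a \<times> 'a \<times> real \<times> nat) list"

definition plan_density :: "'a plan \<Rightarrow> 'a \<Rightarrow> 'a \<Rightarrow> real" where
  "plan_density L u v = (\<Sum>(p, q, c, d)\<leftarrow>L. if p = u \<and> q = v then c else 0)"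

definition plan_out :: "'a plan \<Rightarrow> 'a \<Rightarrow> real" where
  "plan_out L u = (\<Sum>(p, q, c, d)\<leftarrow>L. if p = u then c else 0)"

definition plan_in :: "'a plan \<Rightarrow> 'a \<Rightarrow> real" where
  "plan_in L v = (\<Sum>(p, q, c, d)\<leftarrow>L. if q = v then c else 0)"

definition plan_cost :: "'a plan \<Rightarrow> real" where
  "plan_cost L = (\<Sum>(p, q, c, d)\<leftarrow>L. c * d)"

lemma sum_plan_density_out:
  "finite S \<Longrightarrow> \<forall>(p, q, c, d)\<in>set L. q \<in> S \<Longrightarrow> (\<Sum>v\<in>S. plan_density L u v) = plan_out L u"
  by (induction L) (auto simp: plan_density_def plan_out_def sum.distrib if_distrib)

lemma sum_plan_density_in:
  "finite S \<Longrightarrow> \<forall>(p, q, c, d)\<in>set L. p \<in> S \<Longrightarrow> (\<Sum>u\<in>S. plan_density L u v) = plan_in L v"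
  by (induction L) (auto simp: plan_density_def plan_in_def sum.distrib)

lemma plan_density_nonneg:
  "\<forall>(p, q, c, d)\<in>set L. 0 \<le> c \<Longrightarrow> 0 \<le> plan_density L u v"
  by (induction L) (auto simp: plan_density_def)

lemma plan_density_nonzero:
  "plan_density L u v \<noteq> 0 \<Longrightarrow> \<exists>c d. (u, v, c, d) \<in> set L"
  by (induction L) (fastforce simp: plan_density_def split: if_splits)+

lemma sum_plan_density_cost_le:
  assumes "finite S1" "finite S2"
    and "\<forall>(p, q, c, d)\<in>set L. p \<in> S1 \<and> q \<in> S2 \<and> 0 \<le> c \<and> gdist E p q \<le> d"
  shows "(\<Sum>(u, v)\<in>S1 \<times> S2. plan_density L u v * gdist E u v) \<le> plan_cost L"
  using assms(3)
proof (induction L)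
  case Nil
  then show ?case by (simp add: plan_density_def plan_cost_def)
next
  case (Cons m L)
  obtain p q c d where m: "m = (p, q, c, d)"
    by (cases m) auto
  have pq: "(p, q) \<in> S1 \<times> S2" and "c * gdist E p q \<le> c * d"
    using Cons.prems m by (auto intro: mult_left_mono)
  have "(\<Sum>(u, v)\<in>S1 \<times> S2. plan_density (m # L) u v * gdist E u v)
      = (\<Sum>uv\<in>S1 \<times> S2. if uv = (p, q) then c * gdist E p q else 0)
        + (\<Sum>(u, v)\<in>S1 \<times> S2. plan_density L u v * gdist E u v)"
    unfolding sum.distrib[symmetric]
    by (rule sum.cong) (auto simp: m plan_density_def distrib_right split: if_splits)
  also have "\<dots> = c * gdist E p q + (\<Sum>(u, v)\<in>S1 \<times> S2. plan_density L u v * gdist E u v)"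
    using pq assms(1,2) by simp
  also have "\<dots> \<le> c * d + plan_cost L"
    using Cons \<open>c * gdist E p q \<le> c * d\<close> m by (auto intro: add_mono)
  finally show ?case
    by (simp add: m plan_cost_def)
qed

lemma bdd_below_transport_costs:
  "bdd_below {(\<Sum>(u, v)\<in>supp m1 \<times> supp m2. A u v * real (gdist E u v)) | A. coupling m1 m2 A}"
  by (rule bdd_belowI[of _ 0]) (auto intro!: sum_nonneg simp: coupling_def)

lemma transport_le_plan_cost:
  assumes fin: "finite (supp m1)" "finite (supp m2)"
    and moves: "\<forall>(p, q, c, d)\<in>set L. p \<in> supp m1 \<and> q \<in> supp m2 \<and> 0 \<le> c \<and> gdist E p q \<le> d"
    and out: "\<forall>u\<in>supp m1. plan_out L u = m1 u"
    and into: "\<forall>v\<in>supp m2. plan_in L v = m2 v"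
  shows "transport E m1 m2 \<le> plan_cost L"
proof -
  have coupling: "coupling m1 m2 (plan_density L)"
    unfolding coupling_def
  proof (intro conjI allI impI ballI)
    fix u v
    show "0 \<le> plan_density L u v"
      using moves by (intro plan_density_nonneg) auto
    assume "plan_density L u v \<noteq> 0"
    then show "u \<in> supp m1" "v \<in> supp m2"
      using plan_density_nonzero moves by fastforce+
  next
    fix u assume "u \<in> supp m1"
    then show "(\<Sum>v\<in>supp m2. plan_density L u v) = m1 u"
      using fin moves out by (subst sum_plan_density_out) auto
  next
    fix v assume "v \<in> supp m2"
    then show "(\<Sum>u\<in>supp m1. plan_density L u v) = m2 v"
      using fin moves into by (subst sum_plan_density_in) auto
  qed
  have "transport E m1 m2 \<le> (\<Sum>(u, v)\<in>supp m1 \<times> supp m2. plan_density L u v * gdist E u v)"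
    unfolding transport_def by (rule cInf_lower) (use coupling bdd_below_transport_costs in auto)
  also have "\<dots> \<le> plan_cost L"
    using fin moves by (rule sum_plan_density_cost_le)
  finally show ?thesis .
qed

lemma transport_mu_le_plan_cost:
  assumes "graph E" "0 < \<alpha>" "\<alpha> < 1" "E x x'" "E y y'"
    and "\<forall>(p, q, c, d)\<in>set L. p \<in> insert x {v. E x v} \<and> q \<in> insert y {v. E y v} \<and> 0 \<le> c \<and> gdist E p q \<le> d"
    and "\<forall>u\<in>insert x {v. E x v}. plan_out L u = mu E \<alpha> x u"
    and "\<forall>v\<in>insert y {v. E y v}. plan_in L v = mu E \<alpha> y v"
  shows "transport E (mu E \<alpha> x) (mu E \<alpha> y) \<le> plan_cost L"
  using assms by (intro transport_le_plan_cost) (simp_all add: supp_mu graph_def)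

lemma coupling_product:
  fixes m1 m2 :: "'a \<Rightarrow> real"
  assumes "\<forall>u. 0 \<le> m1 u" "\<forall>v. 0 \<le> m2 v" "sum m1 (supp m1) = 1" "sum m2 (supp m2) = 1"
  shows "coupling m1 m2 (\<lambda>u v. m1 u * m2 v)"
  using assms by (auto simp: coupling_def supp_def simp flip: sum_distrib_left sum_distrib_right)

lemma coupling_cost_ge_lipschitz:
  fixes m1 m2 f :: "'a \<Rightarrow> real"
  assumes A: "coupling m1 m2 A" and fin: "finite (supp m1)" "finite (supp m2)"
    and f: "\<forall>u\<in>supp m1. \<forall>v\<in>supp m2. f u - f v \<le> real (gdist E u v)"
  shows "(\<Sum>u\<in>supp m1. f u * m1 u) - (\<Sum>v\<in>supp m2. f v * m2 v)
    \<le> (\<Sum>(u, v)\<in>supp m1 \<times> supp m2. A u v * real (gdist E u v))"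
proof -
  have A_nonneg: "\<And>u v. 0 \<le> A u v"
    and rows: "\<And>u. u \<in> supp m1 \<Longrightarrow> (\<Sum>v\<in>supp m2. A u v) = m1 u"
    and cols: "\<And>v. v \<in> supp m2 \<Longrightarrow> (\<Sum>u\<in>supp m1. A u v) = m2 v"
    using A by (auto simp: coupling_def)
  have "(\<Sum>u\<in>supp m1. f u * m1 u) = (\<Sum>u\<in>supp m1. \<Sum>v\<in>supp m2. f u * A u v)"
    by (intro sum.cong) (simp_all add: rows flip: sum_distrib_left)
  moreover have "(\<Sum>v\<in>supp m2. f v * m2 v) = (\<Sum>u\<in>supp m1. \<Sum>v\<in>supp m2. f v * A u v)"
    by (subst sum.swap, intro sum.cong) (simp_all add: cols flip: sum_distrib_left)
  moreover have "(\<Sum>u\<in>supp m1. \<Sum>v\<in>supp m2. A u v * (f u - f v))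
      \<le> (\<Sum>u\<in>supp m1. \<Sum>v\<in>supp m2. A u v * gdist E u v)"
    using f A_nonneg by (intro sum_mono mult_left_mono) auto
  ultimately show ?thesis
    by (simp add: sum.cartesian_product algebra_simps sum_subtractf)
qed

lemma transport_ge_lipschitz:
  fixes m1 m2 f :: "'a \<Rightarrow> real"
  assumes "coupling m1 m2 A" "finite (supp m1)" "finite (supp m2)"
    and "\<forall>u\<in>supp m1. \<forall>v\<in>supp m2. f u - f v \<le> real (gdist E u v)"
  shows "(\<Sum>u\<in>supp m1. f u * m1 u) - (\<Sum>v\<in>supp m2. f v * m2 v) \<le> transport E m1 m2"
  unfolding transport_def
  using assms by (intro cInf_greatest) (auto intro: coupling_cost_ge_lipschitz)

lemma transport_mu_ge_lipschitz:
  fixes f :: "'a \<Rightarrow> real"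
  assumes g: "graph E" and "0 < \<alpha>" "\<alpha> < 1" "E x x'" "E y y'"
    and "\<forall>u\<in>insert x {v. E x v}. \<forall>v\<in>insert y {v. E y v}. f u - f v \<le> gdist E u v"
  shows "(\<Sum>u\<in>insert x {v. E x v}. f u * mu E \<alpha> x u) - (\<Sum>v\<in>insert y {v. E y v}. f v * mu E \<alpha> y v)
    \<le> transport E (mu E \<alpha> x) (mu E \<alpha> y)"
proof -
  have sx: "supp (mu E \<alpha> x) = insert x {v. E x v}" and sy: "supp (mu E \<alpha> y) = insert y {v. E y v}"
    using assms by (simp_all add: supp_mu)
  have "coupling (mu E \<alpha> x) (mu E \<alpha> y) (\<lambda>u v. mu E \<alpha> x u * mu E \<alpha> y v)"
    using assms by (intro coupling_product) (simp_all add: mu_nonneg sum_mu)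
  moreover have "finite (supp (mu E \<alpha> x))" "finite (supp (mu E \<alpha> y))"
    using g by (simp_all add: sx sy graph_def)
  moreover have "\<forall>u\<in>supp (mu E \<alpha> x). \<forall>v\<in>supp (mu E \<alpha> y). f u - f v \<le> gdist E u v"
    using assms(6) by (simp only: sx sy)
  ultimately have "(\<Sum>u\<in>supp (mu E \<alpha> x). f u * mu E \<alpha> x u) - (\<Sum>v\<in>supp (mu E \<alpha> y). f v * mu E \<alpha> y v)
    \<le> transport E (mu E \<alpha> x) (mu E \<alpha> y)"
    by (rule transport_ge_lipschitz)
  then show ?thesis
    by (simp only: sx sy)
qed

lemma not_ricci_flat_if_transport_bounded_away:
  assumes g: "graph E" and xy: "E x y" and c: "0 < c"
    and bound: "\<And>\<alpha>. 1/2 < \<alpha> \<Longrightarrow> \<alpha> < 1 \<Longrightarrow> c * (1 - \<alpha>) \<le> \<bar>1 - transport E (mu E \<alpha> x) (mu E \<alpha> y)\<bar>"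
  shows "\<not> ricci_flat E"
proof
  assume "ricci_flat E"
  then have "((\<lambda>\<alpha>. kappa E \<alpha> x y / (1 - \<alpha>)) \<longlongrightarrow> 0) (at_left 1)"
    using xy by (simp add: ricci_flat_def)
  then have lim: "((\<lambda>\<alpha>. \<bar>kappa E \<alpha> x y / (1 - \<alpha>)\<bar>) \<longlongrightarrow> 0) (at_left 1)"
    by (rule tendsto_rabs_zero)
  have "eventually (\<lambda>\<alpha>. \<alpha> \<in> {1/2<..<1}) (at_left (1::real))"
    by (rule eventually_at_left_real) simp
  then have "eventually (\<lambda>\<alpha>. c \<le> \<bar>kappa E \<alpha> x y / (1 - \<alpha>)\<bar>) (at_left 1)"
  proof (rule eventually_mono)
    fix \<alpha> :: real
    assume "\<alpha> \<in> {1/2<..<1}"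
    then show "c \<le> \<bar>kappa E \<alpha> x y / (1 - \<alpha>)\<bar>"
      using bound[of \<alpha>] by (simp add: kappa_def gdist_edge[OF g xy] pos_le_divide_eq)
  qed
  with lim have "c \<le> 0"
    by (rule tendsto_lowerbound) simp
  with c show False
    by simp
qed

corollary not_ricci_flat_if_transport_le:
  assumes "graph E" "E x y" "0 < c"
    and "\<And>\<alpha>. 1/2 < \<alpha> \<Longrightarrow> \<alpha> < 1 \<Longrightarrow> transport E (mu E \<alpha> x) (mu E \<alpha> y) \<le> 1 - c * (1 - \<alpha>)"
  shows "\<not> ricci_flat E"
  using assms(4) by (intro not_ricci_flat_if_transport_bounded_away[OF assms(1-3)]) force

corollary not_ricci_flat_if_transport_ge:
  assumes "graph E" "E x y" "0 < c"
    and "\<And>\<alpha>. 1/2 < \<alpha> \<Longrightarrow> \<alpha> < 1 \<Longrightarrow> 1 + c * (1 - \<alpha>) \<le> transport E (mu E \<alpha> x) (mu E \<alpha> y)"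
  shows "\<not> ricci_flat E"
  using assms(4) by (intro not_ricci_flat_if_transport_bounded_away[OF assms(1-3)]) force

(* u = w is allowed: it covers w being a second common neighbour of x and y. *)
lemma triangle_near_neighbour_not_ricci_flat:
  assumes g: "graph E"
    and Nx: "{v. E x v} = {y, z, w}" and Ny: "{v. E y v} = {x, z, u, u'}"
    and dx: "distinct [x, y, z, w]" and dy: "distinct [x, y, z, u, u']"
    and wu: "gdist E w u \<le> 2"
  shows "\<not> ricci_flat E"
proof -
  have xy: "E x y" and yx: "E y x" and "E y u'" "E z y" "E w x"
    using Nx Ny g by (auto simp: graph_def)
  have "gdist E x u' \<le> 2" "gdist E z u' \<le> 2"
    using xy \<open>E z y\<close> \<open>E y u'\<close> by (auto simp: gdist_le_2_iff[OF g])
  moreover have "gdist E w u' \<le> 3"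
    using gdist_triangle[OF g, of w u' x] gdist_edge[OF g \<open>E w x\<close>] \<open>gdist E x u' \<le> 2\<close> by simp
  ultimately show ?thesis
  proof (intro not_ricci_flat_if_transport_le[OF g xy, of "1/4"])
    fix \<alpha> :: real
    assume \<alpha>: "1/2 < \<alpha>" "\<alpha> < 1"
    let ?b = "1 - \<alpha>"
    have "transport E (mu E \<alpha> x) (mu E \<alpha> y) \<le> plan_cost
      [(x, x, ?b/4, 0), (z, z, ?b/4, 0), (y, y, ?b/3, 0), (x, y, \<alpha> - ?b/3, 1),
       (x, u', ?b/12, 2), (z, u', ?b/12, 2), (w, u', ?b/12, 3), (w, u, ?b/4, 2)]"
      by (rule transport_mu_le_plan_cost[OF g _ _ xy yx])
        (use \<alpha> dx dy wu \<open>gdist E x u' \<le> 2\<close> \<open>gdist E z u' \<le> 2\<close> \<open>gdist E w u' \<le> 3\<close> in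
          \<open>auto simp: Nx Ny mu_neighbours[of E x, OF Nx] mu_neighbours[of E y, OF Ny]
             gdist_edge[OF g xy] plan_out_def plan_in_def\<close>)
    then show "transport E (mu E \<alpha> x) (mu E \<alpha> y) \<le> 1 - 1/4 * (1 - \<alpha>)"
      by (simp add: plan_cost_def field_simps)
  qed simp
qed

lemma triangle_degree_2_not_ricci_flat:
  assumes g: "graph E"
    and Nx: "{v. E x v} = {y, z, w}" and Nz: "{v. E z v} = {x, y}" and d: "distinct [x, y, z, w]"
  shows "\<not> ricci_flat E"
proof -
  have xz: "E x z" and zx: "E z x" and "E w x" "E x y"
    using Nx Nz g by (auto simp: graph_def)
  then have "gdist E w z \<le> 2" "gdist E w y \<le> 2"
    by (auto simp: gdist_le_2_iff[OF g])
  then show ?thesis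
  proof (intro not_ricci_flat_if_transport_le[OF g xz, of "5/6"])
    fix \<alpha> :: real
    assume \<alpha>: "1/2 < \<alpha>" "\<alpha> < 1"
    let ?b = "1 - \<alpha>"
    have "transport E (mu E \<alpha> x) (mu E \<alpha> z) \<le> plan_cost
      [(x, x, ?b/2, 0), (x, z, \<alpha> - ?b/2, 1), (y, y, ?b/3, 0), (z, z, ?b/3, 0),
       (w, z, ?b/6, 2), (w, y, ?b/6, 2)]"
      by (rule transport_mu_le_plan_cost[OF g _ _ xz zx])
        (use \<alpha> d \<open>gdist E w z \<le> 2\<close> \<open>gdist E w y \<le> 2\<close> in
          \<open>auto simp: Nx Nz mu_neighbours[of E x, OF Nx] mu_neighbours[of E z, OF Nz]
             gdist_edge[OF g xz] plan_out_def plan_in_def\<close>)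
    then show "transport E (mu E \<alpha> x) (mu E \<alpha> z) \<le> 1 - 5/6 * (1 - \<alpha>)"
      by (simp add: plan_cost_def field_simps)
  qed simp
qed

lemma triangle_degree_3_not_ricci_flat:
  assumes g: "graph E"
    and Nx: "{v. E x v} = {y, z, w}" and Nz: "{v. E z v} = {x, y, v}"
    and dx: "distinct [x, y, z, w]" and dz: "distinct [x, y, z, v]"
  shows "\<not> ricci_flat E"
proof -
  have xz: "E x z" and zx: "E z x" and "E w x" "E z v"
    using Nx Nz g by (auto simp: graph_def)
  then have "gdist E x v \<le> 2"
    by (auto simp: gdist_le_2_iff[OF g])
  then have "gdist E w v \<le> 3"
    using gdist_triangle[OF g, of w v x] gdist_edge[OF g \<open>E w x\<close>] by simp
  then show ?thesis
  proof (intro not_ricci_flat_if_transport_le[OF g xz, of "1/3"])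
    fix \<alpha> :: real
    assume \<alpha>: "1/2 < \<alpha>" "\<alpha> < 1"
    let ?b = "1 - \<alpha>"
    have "transport E (mu E \<alpha> x) (mu E \<alpha> z) \<le> plan_cost
      [(x, x, ?b/3, 0), (x, z, \<alpha> - ?b/3, 1), (y, y, ?b/3, 0), (z, z, ?b/3, 0), (w, v, ?b/3, 3)]"
      by (rule transport_mu_le_plan_cost[OF g _ _ xz zx])
        (use \<alpha> dx dz \<open>gdist E w v \<le> 3\<close> in
          \<open>auto simp: Nx Nz mu_neighbours[of E x, OF Nx] mu_neighbours[of E z, OF Nz]
             gdist_edge[OF g xz] plan_out_def plan_in_def\<close>)
    then show "transport E (mu E \<alpha> x) (mu E \<alpha> z) \<le> 1 - 1/3 * (1 - \<alpha>)"
      by (simp add: plan_cost_def field_simps)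
  qed simp
qed

lemma leaf_neighbour_not_ricci_flat:
  assumes g: "graph E"
    and Nx: "{v. E x v} = {y, z, w}" and Nw: "{v. E w v} = {x}" and d: "distinct [x, y, z, w]"
  shows "\<not> ricci_flat E"
proof -
  have xw: "E x w" and "E x y" "E x z"
    using Nx by auto
  then have wx: "E w x" and "E y x" "E z x"
    using graph_sym[OF g] by blast+
  have "gdist E y w \<le> 2" "gdist E z w \<le> 2"
    using xw \<open>E y x\<close> \<open>E z x\<close> by (auto simp: gdist_le_2_iff[OF g])
  then show ?thesis
  proof (intro not_ricci_flat_if_transport_le[OF g xw, of "2/3"])
    fix \<alpha> :: real
    assume \<alpha>: "1/2 < \<alpha>" "\<alpha> < 1"
    let ?b = "1 - \<alpha>"
    have "transport E (mu E \<alpha> x) (mu E \<alpha> w) \<le> plan_cost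
      [(x, x, ?b, 0), (x, w, \<alpha> - ?b, 1), (w, w, ?b/3, 0), (y, w, ?b/3, 2), (z, w, ?b/3, 2)]"
      by (rule transport_mu_le_plan_cost[OF g _ _ xw wx])
        (use \<alpha> d \<open>gdist E y w \<le> 2\<close> \<open>gdist E z w \<le> 2\<close> in
          \<open>auto simp: Nx Nw mu_neighbours[of E x, OF Nx] mu_neighbours[of E w, OF Nw]
             gdist_edge[OF g xw] plan_out_def plan_in_def field_simps\<close>)
    then show "transport E (mu E \<alpha> x) (mu E \<alpha> w) \<le> 1 - 2/3 * (1 - \<alpha>)"
      by (simp add: plan_cost_def field_simps)
  qed simp
qed

lemma far_neighbour_lipschitz:
  fixes f :: "'a \<Rightarrow> real"
  assumes g: "graph E" and Nx: "{v. E x v} = {y, z, w}" and d: "distinct [x, y, z, w]"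
    and far: "\<And>t. E w t \<Longrightarrow> t \<noteq> x \<Longrightarrow> 2 < gdist E y t \<and> 2 < gdist E z t"
    and f: "f x = 1" "f y = 2" "f z = 2" "f w = 0" "\<And>t. E w t \<Longrightarrow> t \<noteq> x \<Longrightarrow> f t = -1"
  shows "\<forall>u\<in>insert x {v. E x v}. \<forall>v\<in>insert w {v. E w v}. f u - f v \<le> gdist E u v"
proof -
  have xw: "E x w" and "E x y" "E x z"
    using Nx by auto
  then have wx: "E w x" and yx: "E y x" and zx: "E z x"
    using graph_sym[OF g] by blast+
  have "\<not> E w y" "\<not> E w z"
    using far[of y] far[of z] d by auto
  then have "\<not> gdist E y w \<le> 1" "\<not> gdist E z w \<le> 1"
    unfolding gdist_le_1_iff[OF g] using d graph_sym[OF g] by auto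
  have outer: "2 \<le> gdist E x t" "3 \<le> gdist E y t" "3 \<le> gdist E z t"
    if wt: "E w t" and tx: "t \<noteq> x" for t
  proof -
    show "3 \<le> gdist E y t" "3 \<le> gdist E z t"
      using far[OF wt tx] by auto
    then have "t \<noteq> y" "t \<noteq> z" "t \<noteq> w"
      using graph_irrefl[OF g] wt by auto
    then have "\<not> gdist E x t \<le> 1"
      unfolding gdist_le_1_iff[OF g] using Nx tx by auto
    then show "2 \<le> gdist E x t"
      by simp
  qed
  show ?thesis
  proof (intro ballI)
    fix u v
    assume "u \<in> insert x {v. E x v}" "v \<in> insert w {v. E w v}"
    then have "u \<in> {x, y, z, w}" "v = w \<or> v = x \<or> (E w v \<and> v \<noteq> x)"
      using Nx by auto
    then show "f u - f v \<le> gdist E u v"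
      using d f outer \<open>\<not> gdist E y w \<le> 1\<close> \<open>\<not> gdist E z w \<le> 1\<close>
      by (auto simp: gdist_edge[OF g xw] gdist_edge[OF g wx] gdist_edge[OF g yx] gdist_edge[OF g zx]
          gdist_edge[OF g])
  qed
qed

lemma far_neighbour_not_ricci_flat:
  assumes g: "graph E" and Nx: "{v. E x v} = {y, z, w}" and d: "distinct [x, y, z, w]"
    and dw: "2 \<le> deg E w"
    and far: "\<And>t. E w t \<Longrightarrow> t \<noteq> x \<Longrightarrow> 2 < gdist E y t \<and> 2 < gdist E z t"
  shows "\<not> ricci_flat E"
proof -
  have xw: "E x w"
    using Nx by auto
  then have wx: "E w x"
    by (rule graph_sym[OF g])
  define f :: "'a \<Rightarrow> real"
    where "f v = (if v = x then 1 else if v = y \<or> v = z then 2 else if v = w then 0 else -1)" for v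
  have f: "f x = 1" "f y = 2" "f z = 2" "f w = 0"
    using d by (auto simp: f_def)
  have f_outer: "f t = -1" if "E w t" "t \<noteq> x" for t
    using far[OF that] graph_irrefl[OF g] that by (auto simp: f_def)
  have fin: "finite {v. E w v}" and "x \<in> {v. E w v}"
    using g wx by (auto simp: graph_def)
  then have "(\<Sum>t\<in>{v. E w v}. f t) = 1 - real (card ({v. E w v} - {x}))"
    using f_outer f(1) by (simp add: sum.remove)
  then have sum_f: "(\<Sum>t\<in>{v. E w v}. f t) \<le> 0"
    using dw fin \<open>x \<in> {v. E w v}\<close> by (simp add: deg_def)
  show ?thesis
  proof (rule not_ricci_flat_if_transport_ge[OF g xw, of "1/3"])
    fix \<alpha> :: real
    assume \<alpha>: "1/2 < \<alpha>" "\<alpha> < 1"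
    have "(\<Sum>v\<in>insert w {v. E w v}. f v * mu E \<alpha> w v) = (1 - \<alpha>) / deg E w * (\<Sum>t\<in>{v. E w v}. f t)"
      using sum_mu_weighted[OF g] f(4) by simp
    also have "\<dots> \<le> 0"
      using sum_f \<alpha> by (intro mult_nonneg_nonpos) auto
    finally have "(\<Sum>v\<in>insert w {v. E w v}. f v * mu E \<alpha> w v) \<le> 0" .
    moreover have "(\<Sum>u\<in>insert x {v. E x v}. f u * mu E \<alpha> x u) = 1 + 1/3 * (1 - \<alpha>)"
      using d by (auto simp: Nx mu_neighbours[of E x, OF Nx] f_def field_simps)
    moreover have "(\<Sum>u\<in>insert x {v. E x v}. f u * mu E \<alpha> x u) - (\<Sum>v\<in>insert w {v. E w v}. f v * mu E \<alpha> w v)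
      \<le> transport E (mu E \<alpha> x) (mu E \<alpha> w)"
      using \<alpha> far_neighbour_lipschitz[OF g Nx d far f f_outer]
      by (intro transport_mu_ge_lipschitz[OF g _ _ xw wx]) auto
    ultimately show "1 + 1/3 * (1 - \<alpha>) \<le> transport E (mu E \<alpha> x) (mu E \<alpha> w)"
      by linarith
  qed simp
qed

lemma isolated_neighbour_not_ricci_flat:
  assumes g: "graph E" and Nx: "{v. E x v} = {y, z, w}" and d: "distinct [x, y, z, w]"
    and far: "\<And>t. E w t \<Longrightarrow> t \<noteq> x \<Longrightarrow> 2 < gdist E y t \<and> 2 < gdist E z t"
  shows "\<not> ricci_flat E"
proof (cases "{v. E w v} = {x}")
  case True
  then show ?thesis
    using leaf_neighbour_not_ricci_flat[OF g Nx _ d] by blast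
next
  case False
  have "{x} \<subset> {v. E w v}"
    using False Nx graph_sym[OF g, of x w] by auto
  then have "2 \<le> deg E w"
    using psubset_card_mono[of "{v. E w v}" "{x}"] g by (simp add: deg_def graph_def)
  then show ?thesis
    using far_neighbour_not_ricci_flat[OF g Nx d _ far] by blast
qed

lemma separated_neighbours_far:
  assumes g: "graph E" and Nx: "{v. E x v} = {y, z, w}" and d: "distinct [x, y, z, w]"
    and sep_y: "\<forall>s. E y s \<longrightarrow> s \<in> {x, z} \<or> 2 < gdist E w s"
    and sep_z: "\<forall>s. E z s \<longrightarrow> s \<in> {x, y} \<or> 2 < gdist E w s"
    and wt: "E w t" and tx: "t \<noteq> x"
  shows "2 < gdist E y t"
proof -
  have "\<not> E w y" "\<not> E w z"
    using sep_y sep_z graph_sym[OF g] d by fastforce+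
  have wt_far: "\<not> 2 < gdist E w t"
    using gdist_edge[OF g wt] by simp
  have "\<not> gdist E y t \<le> 2"
    unfolding gdist_le_2_iff[OF g]
  proof (intro notI, elim disjE exE conjE)
    assume "y = t"
    then show False
      using wt \<open>\<not> E w y\<close> by simp
  next
    assume "E y t"
    then have "t = z"
      using sep_y tx wt_far by auto
    then show False
      using wt \<open>\<not> E w z\<close> by simp
  next
    fix s
    assume "E y s" "E s t"
    have "gdist E w s \<le> 2"
      using wt graph_sym[OF g \<open>E s t\<close>] by (auto simp: gdist_le_2_iff[OF g])
    then have "s = x \<or> s = z"
      using sep_y \<open>E y s\<close> by auto
    then show False
    proof
      assume "s = x"
      then have "t \<in> {y, z, w}"
        using Nx \<open>E s t\<close> by auto
      then show False
        using wt \<open>\<not> E w y\<close> \<open>\<not> E w z\<close> graph_irrefl[OF g] by auto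
    next
      assume "s = z"
      then show False
        using sep_z \<open>E s t\<close> tx wt \<open>\<not> E w y\<close> wt_far by auto
    qed
  qed
  then show ?thesis
    by simp
qed

lemma degree_4_neighbour_separated:
  assumes g: "graph E" and rf: "ricci_flat E"
    and Nx: "{v. E x v} = {y, z, w}" and d: "distinct [x, y, z, w]"
    and yz: "E y z" and dy: "deg E y = 4"
  shows "\<forall>s. E y s \<longrightarrow> s \<in> {x, z} \<or> 2 < gdist E w s"
proof (intro allI impI)
  fix s
  assume ys: "E y s"
  show "s \<in> {x, z} \<or> 2 < gdist E w s"
  proof (rule ccontr)
    assume "\<not> (s \<in> {x, z} \<or> 2 < gdist E w s)"
    then have s: "s \<notin> {x, z}" and ws: "gdist E w s \<le> 2"
      by auto
    have "{x, z, s} \<subseteq> {v. E y v}"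
      using Nx ys yz graph_sym[OF g, of x y] by auto
    moreover have "deg E y = Suc (card {x, z, s})"
      using dy d s by auto
    ultimately obtain s' where "s' \<notin> {x, z, s}" "s' \<noteq> y" "{v. E y v} = insert s' {x, z, s}"
      by (rule neighbours_eq_insert[OF g])
    moreover have "s \<noteq> y"
      using ys graph_irrefl[OF g] by auto
    ultimately have "{v. E y v} = {x, z, s, s'}" "distinct [x, y, z, s, s']"
      using d s by auto
    then show False
      using triangle_near_neighbour_not_ricci_flat[OF g Nx _ d _ ws] rf by blast
  qed
qed

lemma triangle_low_degree_not_ricci_flat:
  assumes g: "graph E" and Nx: "{v. E x v} = {y, z, w}" and d: "distinct [x, y, z, w]"
    and yz: "E y z" and dz: "deg E z \<le> 3"
  shows "\<not> ricci_flat E"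
proof -
  have sub: "{x, y} \<subseteq> {v. E z v}"
    using Nx yz graph_sym[OF g] by auto
  moreover have "card {x, y} = 2"
    using d by simp
  moreover have "finite {v. E z v}"
    using g by (simp add: graph_def)
  ultimately have "2 \<le> deg E z"
    unfolding deg_def by (metis card_mono)
  then consider "deg E z = card {x, y}" | "deg E z = Suc (card {x, y})"
    using dz d by fastforce
  then show ?thesis
  proof cases
    case 1
    then have "{v. E z v} = {x, y}"
      using card_subset_eq[OF \<open>finite {v. E z v}\<close> sub] by (simp add: deg_def)
    then show ?thesis
      using triangle_degree_2_not_ricci_flat[OF g Nx _ d] by blast
  next
    case 2
    then obtain v where "v \<notin> {x, y}" "v \<noteq> z" "{v. E z v} = insert v {x, y}"
      by (rule neighbours_eq_insert[OF g sub])
    then have "{v. E z v} = {x, y, v}" "distinct [x, y, z, v]"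
      using d by auto
    then show ?thesis
      using triangle_degree_3_not_ricci_flat[OF g Nx _ d] by blast
  qed
qed

theorem lemma7:
  fixes E :: "'a \<Rightarrow> 'a \<Rightarrow> bool" and x y :: 'a
  assumes "graph E"
    and "ricci_flat E"
    and "\<forall>v. deg E v \<le> 4"
    and "E x y"
    and "deg E x = 3"
    and "deg E y = 4"
  shows "\<not> edge_in_cycle E x y 3"
proof
  note g = \<open>graph E\<close> and rf = \<open>ricci_flat E\<close>
  assume "edge_in_cycle E x y 3"
  then obtain z where xz: "E x z" and yz: "E y z"
    using triangle_common_neighbour[OF g] by blast
  have "y \<noteq> z"
    using yz graph_irrefl[OF g] by blast
  then obtain w where Nx: "{v. E x v} = {y, z, w}" and d: "distinct [x, y, z, w]"
    using degree_3_neighbours[OF g \<open>deg E x = 3\<close> \<open>E x y\<close> xz] by blast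
  then have Nx': "{v. E x v} = {z, y, w}" and d': "distinct [x, z, y, w]"
    by auto
  have sep_y: "\<forall>s. E y s \<longrightarrow> s \<in> {x, z} \<or> 2 < gdist E w s"
    using degree_4_neighbour_separated[OF g rf Nx d yz \<open>deg E y = 4\<close>] .
  have "deg E z \<le> 4" "\<not> deg E z \<le> 3"
    using \<open>\<forall>v. deg E v \<le> 4\<close> triangle_low_degree_not_ricci_flat[OF g Nx d yz] rf by blast+
  then have "deg E z = 4"
    by simp
  then have sep_z: "\<forall>s. E z s \<longrightarrow> s \<in> {x, y} \<or> 2 < gdist E w s"
    using degree_4_neighbour_separated[OF g rf Nx' d' graph_sym[OF g yz]] by blast
  have "2 < gdist E y t \<and> 2 < gdist E z t" if "E w t" "t \<noteq> x" for t
    using separated_neighbours_far[OF g Nx d sep_y sep_z that]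
      separated_neighbours_far[OF g Nx' d' sep_z sep_y that] by blast
  then show False
    using isolated_neighbour_not_ricci_flat[OF g Nx d] rf by blast
qed

end
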